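(* Let $\Omega\subset\mathbb R^d$ be a connected bounded open set, $M>0$, and $a_k\in L^1(\Omega\times\Omega)$ non-negative with $\|a_k\|_{L^1(\Omega\times\Omega)}\le M$. Let $F_k(u)=\int_{\Omega\times\Omega}|u(x)-u(y)|^2a_k(x,y)\,dx\,dy+\int_\Omega|\nabla u|^2\,dx$ on $H^1_0(\Omega)$, assume $F_k$ $\Gamma$-converges in the weak topology of $H^1_0(\Omega)$ to $F$, and let $\mu,\nu$ be positive Radon measures on $\Omega\times\Omega$ and $\Omega$ such that $\mu$ is symmetric, $\mu((\Omega\times\Omega)\cap\Delta)=0$ with $\Delta=\{(x,x)\}$, and $F(u)=\int_{\Omega\times\Omega}|u(x)-u(y)|^2d\mu+\int_\Omega|u|^2d\nu+\int_\Omega|\nabla u|^2dx$ for all $u\in C^\infty_c(\Omega)$. Suppose moreover that for every $\varepsilon>0$ there exists a compact set $K_\varepsilon\subset\Omega$ such that $$\int_{(\Omega\times\Omega)\setminus(K_\varepsilon\times K_\varepsilon)}a_k(x,y)\,dx\,dy\le\varepsilon\quad\text{for every }k\in\mathbb N.$$ Then $\nu$ is the null measure.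
   Context: $\Gamma$-convergence in the weak topology of $H^1_0(\Omega)$ is understood in the usual sequential sense. A symmetric measure satisfies $\mu(A\times B)=\mu(B\times A)$ for all Borel $A,B\subset\Omega$. *)

theory Defs
  imports "HOL-Analysis.Analysis"
begin

definition pd :: "'d::finite \<Rightarrow> (real^'d \<Rightarrow> real) \<Rightarrow> real^'d \<Rightarrow> real" where
  "pd i f x = frechet_derivative f (at x) (axis i 1)"

fun Ck :: "nat \<Rightarrow> (real^'d::finite \<Rightarrow> real) set" where
  "Ck 0 = {f. continuous_on UNIV f}"
| "Ck (Suc n) = {f. f differentiable_on UNIV \<and> (\<forall>i. pd i f \<in> Ck n)}"

definition smooth_fun :: "(real^'d::finite \<Rightarrow> real) set" where
  "smooth_fun = (\<Inter>n. Ck n)"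

definition test_fun :: "(real^'d::finite) set \<Rightarrow> (real^'d \<Rightarrow> real) set" where
  "test_fun \<Omega> = {\<phi>. \<phi> \<in> smooth_fun \<and>
      (\<exists>K. compact K \<and> K \<subseteq> \<Omega> \<and> (\<forall>x. x \<notin> K \<longrightarrow> \<phi> x = 0))}"

definition grad :: "(real^'d::finite \<Rightarrow> real) \<Rightarrow> real^'d \<Rightarrow> real^'d" where
  "grad f x = (\<chi> i. pd i f x)"

definition L2_on :: "(real^'d::finite) set \<Rightarrow> (real^'d \<Rightarrow> real) \<Rightarrow> bool" where
  "L2_on \<Omega> u \<longleftrightarrow> u \<in> borel_measurable lborel \<and> set_integrable lborel \<Omega> (\<lambda>x. (u x)\<^sup>2)"

definition L2v_on :: "(real^'d::finite) set \<Rightarrow> (real^'d \<Rightarrow> real^'d) \<Rightarrow> bool" where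
  "L2v_on \<Omega> g \<longleftrightarrow> g \<in> borel_measurable lborel \<and> set_integrable lborel \<Omega> (\<lambda>x. (norm (g x))\<^sup>2)"

definition weak_grad :: "(real^'d::finite) set \<Rightarrow> (real^'d \<Rightarrow> real) \<Rightarrow> (real^'d \<Rightarrow> real^'d) \<Rightarrow> bool" where
  "weak_grad \<Omega> u g \<longleftrightarrow> (\<forall>\<phi>\<in>test_fun \<Omega>. \<forall>i.
      (LINT x:\<Omega>|lborel. u x * pd i \<phi> x) = - (LINT x:\<Omega>|lborel. g x $ i * \<phi> x))"

definition H1_0 :: "(real^'d::finite) set \<Rightarrow> (real^'d \<Rightarrow> real) set" where
  "H1_0 \<Omega> = {u. L2_on \<Omega> u \<and> (\<exists>g. weak_grad \<Omega> u g \<and> L2v_on \<Omega> g \<and>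
      (\<exists>\<phi>. (\<forall>n. \<phi> n \<in> test_fun \<Omega>) \<and>
        (\<lambda>n. LINT x:\<Omega>|lborel. (u x - \<phi> n x)\<^sup>2) \<longlonglongrightarrow> 0 \<and>
        (\<lambda>n. LINT x:\<Omega>|lborel. (norm (g x - grad (\<phi> n) x))\<^sup>2) \<longlonglongrightarrow> 0))}"

text \<open>The weak gradient of an H^1_0 function (unique a.e.).\<close>
definition wgrad :: "(real^'d::finite) set \<Rightarrow> (real^'d \<Rightarrow> real) \<Rightarrow> real^'d \<Rightarrow> real^'d" where
  "wgrad \<Omega> u = (SOME g. weak_grad \<Omega> u g \<and> L2v_on \<Omega> g)"

definition H1_inner :: "(real^'d::finite) set \<Rightarrow> (real^'d \<Rightarrow> real) \<Rightarrow> (real^'d \<Rightarrow> real) \<Rightarrow> real" where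
  "H1_inner \<Omega> u v = (LINT x:\<Omega>|lborel. u x * v x) + (LINT x:\<Omega>|lborel. wgrad \<Omega> u x \<bullet> wgrad \<Omega> v x)"

text \<open>Weak convergence in the Hilbert space H^1_0 (by Riesz representation,
  testing against all continuous linear functionals = testing against the scalar product).\<close>
definition weak_conv_H1_0 :: "(real^'d::finite) set \<Rightarrow> (nat \<Rightarrow> real^'d \<Rightarrow> real) \<Rightarrow> (real^'d \<Rightarrow> real) \<Rightarrow> bool" where
  "weak_conv_H1_0 \<Omega> us u \<longleftrightarrow> (\<forall>k. us k \<in> H1_0 \<Omega>) \<and> u \<in> H1_0 \<Omega> \<and>
     (\<forall>v\<in>H1_0 \<Omega>. (\<lambda>k. H1_inner \<Omega> (us k) v) \<longlonglongrightarrow> H1_inner \<Omega> u v)"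

definition Gamma_conv_weak_H1_0 :: "(real^'d::finite) set \<Rightarrow> (nat \<Rightarrow> (real^'d \<Rightarrow> real) \<Rightarrow> ennreal)
     \<Rightarrow> ((real^'d \<Rightarrow> real) \<Rightarrow> ennreal) \<Rightarrow> bool" where
  "Gamma_conv_weak_H1_0 \<Omega> Fk F \<longleftrightarrow>
     (\<forall>u\<in>H1_0 \<Omega>. \<forall>us. weak_conv_H1_0 \<Omega> us u \<longrightarrow> F u \<le> liminf (\<lambda>k. Fk k (us k))) \<and>
     (\<forall>u\<in>H1_0 \<Omega>. \<exists>us. weak_conv_H1_0 \<Omega> us u \<and> limsup (\<lambda>k. Fk k (us k)) \<le> F u)"

definition dirichlet :: "(real^'d::finite) set \<Rightarrow> (real^'d \<Rightarrow> real) \<Rightarrow> ennreal" where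
  "dirichlet \<Omega> u = (\<integral>\<^sup>+ x\<in>\<Omega>. ennreal ((norm (wgrad \<Omega> u x))\<^sup>2) \<partial>lborel)"

end

theory Submission
  imports Defs "HOL-Computational_Algebra.Polynomial"
begin

text \<open>Test the \<open>\<Gamma>\<close>-liminf inequality with the constant sequence \<open>u\<^sub>k = u\<close>, where \<open>u\<close> is a
  smooth cutoff in \<open>\<Omega>\<close> with \<open>0 \<le> u \<le> 1\<close> and \<open>u = 1\<close> on a compact \<open>A\<close> and on the compact \<open>K\<^sub>\<epsilon>\<close>
  of the tightness hypothesis. The increments \<open>u x - u y\<close> vanish on \<open>K\<^sub>\<epsilon> \<times> K\<^sub>\<epsilon>\<close> and are
  bounded by \<open>1\<close> elsewhere, so \<open>F\<^sub>k u \<le> \<epsilon> + \<integral>|\<nabla>u|\<^sup>2\<close>, whereas the representation of \<open>F\<close>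
  on test functions gives \<open>F u \<ge> \<nu> A + \<integral>|\<nabla>u|\<^sup>2\<close>. Hence \<open>\<nu> A \<le> \<epsilon>\<close> for all \<open>\<epsilon>\<close>, and a
  measure on the open set \<open>\<Omega>\<close> vanishing on its compact subsets is null.\<close>

section \<open>Closure properties of \<open>C\<^sup>k\<close>\<close>

lemma pd_has_derivative: "(f has_derivative f') (at x) \<Longrightarrow> pd i f x = f' (axis i 1)"
  unfolding pd_def using frechet_derivative_at by metis

lemma has_derivative_frechet_derivative_UNIV:
  "f differentiable_on UNIV \<Longrightarrow> (f has_derivative frechet_derivative f (at x)) (at x)"
  by (simp add: differentiable_on_def frechet_derivative_works)

lemma Ck_SucD: "f \<in> Ck (Suc n) \<Longrightarrow> f \<in> Ck n"
proof (induction n arbitrary: f)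
  case 0 then show ?case by (auto intro: differentiable_imp_continuous_on)
next
  case (Suc n) then show ?case by auto
qed

lemma smooth_fun_iff: "f \<in> smooth_fun \<longleftrightarrow> (\<forall>n. f \<in> Ck n)"
  by (simp add: smooth_fun_def)

lemma smooth_funD:
  assumes "f \<in> smooth_fun"
  shows "f differentiable_on UNIV" "continuous_on UNIV f"
    "\<And>i. continuous_on UNIV (pd i f)" "\<And>i. pd i f \<in> smooth_fun"
proof -
  have "f \<in> Ck (Suc 0)" using assms by (simp add: smooth_fun_iff del: Ck.simps)
  then show "f differentiable_on UNIV" "\<And>i. continuous_on UNIV (pd i f)" by auto
  then show "continuous_on UNIV f" using differentiable_imp_continuous_on by blast
  show "pd i f \<in> smooth_fun" for i
    unfolding smooth_fun_iff
  proof
    fix n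
    have "f \<in> Ck (Suc n)" using assms by (simp add: smooth_fun_iff del: Ck.simps)
    then show "pd i f \<in> Ck n" by simp
  qed
qed

lemma Ck_const: "(\<lambda>x. c) \<in> Ck n"
proof (induction n arbitrary: c)
  case (Suc n)
  have pd_const: "pd i (\<lambda>x. c) = (\<lambda>x. 0)" for i by (rule ext) (simp add: pd_def)
  show ?case by (simp add: pd_const Suc.IH)
qed simp

lemma Ck_vec_nth: "(\<lambda>x::real^'d::finite. x $ j) \<in> Ck n"
proof (induction n)
  case (Suc n)
  have d: "((\<lambda>x::real^'d. x $ j) has_derivative (\<lambda>h. h $ j)) (at x)" for x
    by (rule bounded_linear_imp_has_derivative) (rule bounded_linear_vec_nth)
  then have "pd i (\<lambda>x::real^'d. x $ j) = (\<lambda>x. axis i 1 $ j)" for i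
    by (intro ext pd_has_derivative)
  then show ?case using d by (auto simp: Ck_const differentiable_on_def differentiable_def)
qed (auto intro: continuous_intros)

lemma pd_add:
  "f differentiable_on UNIV \<Longrightarrow> g differentiable_on UNIV \<Longrightarrow>
    pd i (\<lambda>x. f x + g x) = (\<lambda>x. pd i f x + pd i g x)"
  by (rule ext, rule pd_has_derivative[THEN trans],
      rule has_derivative_add[OF has_derivative_frechet_derivative_UNIV has_derivative_frechet_derivative_UNIV])
     (auto simp: pd_def)

lemma pd_mult:
  "f differentiable_on UNIV \<Longrightarrow> g differentiable_on UNIV \<Longrightarrow>
    pd i (\<lambda>x. f x * g x) = (\<lambda>x. f x * pd i g x + pd i f x * g x)"
  by (rule ext, rule pd_has_derivative[THEN trans],
      rule has_derivative_mult[OF has_derivative_frechet_derivative_UNIV has_derivative_frechet_derivative_UNIV])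
     (auto simp: pd_def)

lemma Ck_add: "f \<in> Ck n \<Longrightarrow> g \<in> Ck n \<Longrightarrow> (\<lambda>x. f x + g x) \<in> Ck n"
proof (induction n arbitrary: f g)
  case (Suc n)
  have "(\<lambda>x. f x + g x) differentiable_on UNIV"
    using Suc.prems by (intro differentiable_on_add) auto
  then show ?case using Suc by (auto simp: pd_add)
qed (auto intro: continuous_intros)

lemma Ck_mult: "f \<in> Ck n \<Longrightarrow> g \<in> Ck n \<Longrightarrow> (\<lambda>x. f x * g x) \<in> Ck n"
proof (induction n arbitrary: f g)
  case (Suc n)
  have "f \<in> Ck n" "g \<in> Ck n" using Suc.prems Ck_SucD by blast+
  moreover have "(\<lambda>x. f x * g x) differentiable_on UNIV"
    using Suc.prems by (intro differentiable_on_mult) auto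
  ultimately show ?case using Suc by (auto simp: pd_mult intro!: Ck_add)
qed (auto intro: continuous_intros)

lemma Ck_uminus: "f \<in> Ck n \<Longrightarrow> (\<lambda>x. - f x) \<in> Ck n"
  using Ck_mult[OF Ck_const[of "-1"], of f n] by simp

lemma Ck_diff: "f \<in> Ck n \<Longrightarrow> g \<in> Ck n \<Longrightarrow> (\<lambda>x. f x - g x) \<in> Ck n"
  using Ck_add[OF _ Ck_uminus, of f n g] by simp

lemma Ck_sum: "finite A \<Longrightarrow> (\<And>a. a \<in> A \<Longrightarrow> f a \<in> Ck n) \<Longrightarrow> (\<lambda>x. \<Sum>a\<in>A. f a x) \<in> Ck n"
  by (induction A rule: finite_induct) (auto intro: Ck_const Ck_add)

lemma Ck_inverse: "f \<in> Ck n \<Longrightarrow> (\<And>x. f x \<noteq> 0) \<Longrightarrow> (\<lambda>x. inverse (f x)) \<in> Ck n"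
proof (induction n arbitrary: f)
  case (Suc n)
  have fd: "f differentiable_on UNIV" using Suc.prems by simp
  have "pd i (\<lambda>x. inverse (f x)) = (\<lambda>x. - 1 * (inverse (f x) * pd i f x * inverse (f x)))" for i
    by (rule ext, rule pd_has_derivative[THEN trans],
        rule Deriv.has_derivative_inverse[OF Suc.prems(2) has_derivative_frechet_derivative_UNIV[OF fd]])
       (auto simp: pd_def)
  moreover have "(\<lambda>x. inverse (f x)) \<in> Ck n" using Suc Ck_SucD by blast
  moreover have "(\<lambda>x. inverse (f x)) differentiable_on UNIV"
    using fd Suc.prems(2) by (intro differentiable_on_inverse) auto
  ultimately show ?case using Suc.prems by (auto intro!: Ck_mult Ck_uminus)
qed (auto intro!: continuous_intros)

lemma Ck_compose:
  assumes "\<And>m t. (D m has_real_derivative D (Suc m) t) (at t)" and "g \<in> Ck n"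
  shows "(\<lambda>x. D 0 (g x)) \<in> Ck n"
  using assms
proof (induction n arbitrary: g D)
  case 0
  have "continuous_on UNIV (D 0)"
    using 0(1) by (meson DERIV_isCont continuous_at_imp_continuous_on)
  then show ?case using 0(2) by (auto intro: continuous_on_compose2[of UNIV "D 0" UNIV g])
next
  case (Suc n)
  have gd: "g differentiable_on UNIV" using Suc.prems by simp
  have d: "((\<lambda>x. D 0 (g x)) has_derivative (\<lambda>h. frechet_derivative g (at x) h * D 1 (g x))) (at x)" for x
    using DERIV_compose_FDERIV[OF Suc.prems(1) has_derivative_frechet_derivative_UNIV[OF gd]] by simp
  then have "pd i (\<lambda>x. D 0 (g x)) = (\<lambda>x. pd i g x * D 1 (g x))" for i
    by (intro ext pd_has_derivative[THEN trans]) (simp_all add: pd_def)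
  moreover have "(\<lambda>x. D 1 (g x)) \<in> Ck n"
    using Suc.IH[where g=g and D="\<lambda>m. D (Suc m)"] Suc.prems(1) Ck_SucD[OF Suc.prems(2)] by simp
  moreover have "(\<lambda>x. D 0 (g x)) differentiable_on UNIV"
    using d by (auto simp: differentiable_on_def differentiable_def)
  ultimately show ?case using Suc.prems by (auto intro!: Ck_mult)
qed

lemma Ck_dist_power2: "(\<lambda>x::real^'d::finite. (dist x c)\<^sup>2) \<in> Ck n"
proof -
  have "(\<lambda>x::real^'d. (dist x c)\<^sup>2) = (\<lambda>x. \<Sum>i\<in>UNIV. (x $ i - c $ i) * (x $ i - c $ i))"
    by (simp add: dist_norm power2_norm_eq_inner inner_vec_def)
  moreover have "(\<lambda>x::real^'d. \<Sum>i\<in>UNIV. (x $ i - c $ i) * (x $ i - c $ i)) \<in> Ck n"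
    by (rule Ck_sum) (auto intro!: Ck_mult Ck_diff Ck_vec_nth Ck_const)
  ultimately show ?thesis by simp
qed

section \<open>A smooth cutoff function\<close>

text \<open>\<open>flat_deriv m\<close> is the \<open>m\<close>-th derivative of the flat function \<open>t \<mapsto> exp (-1/t)\<close>
  (extended by \<open>0\<close> for \<open>t \<le> 0\<close>); for \<open>t > 0\<close> it has the form \<open>p\<^sub>m(1/t) exp (-1/t)\<close>.\<close>
fun flat_poly :: "nat \<Rightarrow> real poly" where
  "flat_poly 0 = 1"
| "flat_poly (Suc m) = [:0, 0, 1:] * (flat_poly m - pderiv (flat_poly m))"

definition flat_deriv :: "nat \<Rightarrow> real \<Rightarrow> real" where
  "flat_deriv m t = (if 0 < t then poly (flat_poly m) (1 / t) * exp (- (1 / t)) else 0)"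

lemma poly_times_power_div_exp_tendsto_0:
  "((\<lambda>s. poly p s * s ^ k / exp s) \<longlongrightarrow> (0::real)) at_top"
proof (induction p arbitrary: k rule: pCons_induct)
  case (pCons a p)
  have "((\<lambda>s. a * (s ^ k / exp s) + poly p s * s ^ Suc k / exp s) \<longlongrightarrow> a * 0 + 0) at_top"
    by (intro tendsto_add tendsto_mult tendsto_const tendsto_power_div_exp_0 pCons.IH)
  moreover have "(\<lambda>s. a * (s ^ k / exp s) + poly p s * s ^ Suc k / exp s)
      = (\<lambda>s. poly (pCons a p) s * s ^ k / exp s)"
    by (rule ext) (simp add: algebra_simps add_divide_distrib)
  ultimately show ?case by simp
qed simp

lemma flat_deriv_has_derivative_pos:
  assumes "t > 0"
  shows "(flat_deriv m has_real_derivative flat_deriv (Suc m) t) (at t)"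
proof -
  let ?P = "flat_poly m"
  have inv: "((\<lambda>t. 1 / t) has_real_derivative - (1 / t\<^sup>2)) (at t)"
    using DERIV_inverse[of t] assms by (simp add: divide_inverse power2_eq_square power_inverse)
  have "((\<lambda>t. poly ?P (1 / t) * exp (- (1 / t))) has_real_derivative
      poly (pderiv ?P) (1 / t) * (- (1 / t\<^sup>2)) * exp (- (1 / t)) + poly ?P (1 / t) * (exp (- (1 / t)) * (1 / t\<^sup>2))) (at t)"
    using DERIV_mult[OF DERIV_chain2[OF poly_DERIV[of ?P] inv] DERIV_chain2[OF DERIV_exp DERIV_minus[OF inv]]]
    by (simp add: algebra_simps)
  also have "poly (pderiv ?P) (1 / t) * (- (1 / t\<^sup>2)) * exp (- (1 / t)) + poly ?P (1 / t) * (exp (- (1 / t)) * (1 / t\<^sup>2))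
      = flat_deriv (Suc m) t"
    using assms by (simp add: flat_deriv_def algebra_simps power2_eq_square)
  finally show ?thesis
    by (rule has_field_derivative_transform_within_open[of _ _ _ "{0<..}"])
       (use assms in \<open>auto simp: flat_deriv_def\<close>)
qed

lemma flat_deriv_has_derivative_0: "(flat_deriv m has_real_derivative 0) (at 0)"
proof -
  have "((\<lambda>h. (flat_deriv m h - flat_deriv m 0) / h) \<longlongrightarrow> 0) (at 0)"
  proof (rule filterlim_split_at)
    show "((\<lambda>h. (flat_deriv m h - flat_deriv m 0) / h) \<longlongrightarrow> 0) (at_left 0)"
      by (rule tendsto_eventually)
         (auto simp: flat_deriv_def eventually_at_left_field intro: exI[of _ "-1"])
    have "((\<lambda>h. poly (flat_poly m) (inverse h) * (inverse h) ^ 1 / exp (inverse h)) \<longlongrightarrow> 0) (at_right 0)"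
      by (rule filterlim_compose[OF poly_times_power_div_exp_tendsto_0 filterlim_inverse_at_top_right])
    then show "((\<lambda>h. (flat_deriv m h - flat_deriv m 0) / h) \<longlongrightarrow> 0) (at_right 0)"
      by (rule tendsto_cong[THEN iffD1, rotated])
         (auto simp: flat_deriv_def eventually_at_right_field exp_minus field_simps intro!: exI[of _ 1])
  qed
  then show ?thesis by (simp add: DERIV_def)
qed

lemma flat_deriv_has_derivative: "(flat_deriv m has_real_derivative flat_deriv (Suc m) t) (at t)"
proof -
  consider "t > 0" | "t < 0" | "t = 0" by linarith
  then show ?thesis
  proof cases
    case 2
    have "(flat_deriv m has_real_derivative 0) (at t)"
      by (rule has_field_derivative_transform_within_open[of "\<lambda>t. 0" _ _ "{..<0}"])
         (use 2 in \<open>auto simp: flat_deriv_def\<close>)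
    then show ?thesis using 2 by (simp add: flat_deriv_def)
  qed (use flat_deriv_has_derivative_pos flat_deriv_has_derivative_0 in \<open>auto simp: flat_deriv_def\<close>)
qed

definition smooth_step :: "real \<Rightarrow> real" where
  "smooth_step t = flat_deriv 0 t / (flat_deriv 0 t + flat_deriv 0 (1 - t))"

lemma flat_deriv_0: "flat_deriv 0 t = (if 0 < t then exp (- (1 / t)) else 0)"
  by (simp add: flat_deriv_def)

lemma smooth_step_denominator_pos: "flat_deriv 0 t + flat_deriv 0 (1 - t) > 0"
  by (auto simp: flat_deriv_0 add_pos_nonneg add_nonneg_pos)

lemma smooth_step_nonneg: "0 \<le> smooth_step t"
  and smooth_step_le_1: "smooth_step t \<le> 1"
  using smooth_step_denominator_pos[of t] by (auto simp: smooth_step_def flat_deriv_0 field_simps)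

lemma smooth_step_eq_0: "t \<le> 0 \<Longrightarrow> smooth_step t = 0"
  by (simp add: smooth_step_def flat_deriv_0)

lemma smooth_step_eq_1: "t \<ge> 1 \<Longrightarrow> smooth_step t = 1"
  by (simp add: smooth_step_def flat_deriv_0)

lemma Ck_smooth_step: "g \<in> Ck n \<Longrightarrow> (\<lambda>x. smooth_step (g x)) \<in> Ck n"
proof -
  assume g: "g \<in> Ck n"
  have num: "(\<lambda>x. flat_deriv 0 (g x)) \<in> Ck n"
    by (rule Ck_compose[of flat_deriv, OF flat_deriv_has_derivative g])
  have "(\<lambda>x. flat_deriv 0 (1 - g x)) \<in> Ck n"
    by (rule Ck_compose[of flat_deriv, OF flat_deriv_has_derivative Ck_diff[OF Ck_const g]])
  then have "(\<lambda>x. inverse (flat_deriv 0 (g x) + flat_deriv 0 (1 - g x))) \<in> Ck n"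
    by (intro Ck_inverse Ck_add num) (use smooth_step_denominator_pos in \<open>auto simp: less_le\<close>)
  then show ?thesis
    unfolding smooth_step_def divide_inverse by (rule Ck_mult[OF num])
qed

lemma smooth_cutoff:
  fixes K \<Omega> :: "(real^'d::finite) set"
  assumes "open \<Omega>" "compact K" "K \<subseteq> \<Omega>"
  obtains u L where "u \<in> smooth_fun" "compact L" "L \<subseteq> \<Omega>" "\<And>x. x \<notin> L \<Longrightarrow> u x = 0"
    "\<And>x. 0 \<le> u x" "\<And>x. u x \<le> 1" "\<And>x. x \<in> K \<Longrightarrow> u x = 1"
proof -
  obtain r where r: "\<And>c. c \<in> K \<Longrightarrow> r c > 0 \<and> cball c (r c) \<subseteq> \<Omega>"
    using assms open_contains_cball by (metis subsetD)
  have "K \<subseteq> (\<Union>c\<in>K. ball c (r c / 2))"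
    using r by force
  then obtain C where C: "C \<subseteq> K" "finite C" "K \<subseteq> (\<Union>c\<in>C. ball c (r c / 2))"
    using compactE_image[OF assms(2), of K "\<lambda>c. ball c (r c / 2)"] by blast
  text \<open>\<open>q c\<close> is \<open>\<ge> 1\<close> on \<open>ball c (r c / 2)\<close> and \<open>\<le> 0\<close> outside \<open>cball c (r c)\<close>.\<close>
  define q where "q c x = (r c ^ 2 - (dist x c)\<^sup>2) * (4 / (3 * r c ^ 2))" for c x
  define u where "u x = smooth_step (\<Sum>c\<in>C. smooth_step (q c x))" for x
  define L where "L = (\<Union>c\<in>C. cball c (r c))"
  show ?thesis
  proof
    show "u \<in> smooth_fun" unfolding smooth_fun_iff u_def q_def
      by (intro allI Ck_smooth_step Ck_sum[OF C(2)] Ck_mult Ck_diff Ck_const Ck_dist_power2)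
    show "compact L" unfolding L_def using C by auto
    show "L \<subseteq> \<Omega>" unfolding L_def using C r by blast
    show "0 \<le> u x" "u x \<le> 1" for x unfolding u_def by (rule smooth_step_nonneg smooth_step_le_1)+
  next
    fix x assume x: "x \<notin> L"
    have "q c x \<le> 0" if "c \<in> C" for c
    proof -
      have "r c > 0" using r that C by auto
      moreover have "dist x c > r c" using x that unfolding L_def by (auto simp: dist_commute)
      ultimately have "(dist x c)\<^sup>2 \<ge> r c ^ 2" by (intro power_mono) auto
      then show ?thesis unfolding q_def using \<open>r c > 0\<close> by (intro mult_nonpos_nonneg) auto
    qed
    then show "u x = 0" unfolding u_def by (simp add: smooth_step_eq_0)
  next
    fix x assume "x \<in> K"
    then obtain c where c: "c \<in> C" "dist x c < r c / 2" using C by (auto simp: dist_commute)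
    have "r c > 0" using r c C by auto
    moreover have "(dist x c)\<^sup>2 < (r c / 2) ^ 2" using c by (intro power_strict_mono) auto
    ultimately have "q c x \<ge> 1" unfolding q_def by (simp add: field_simps power2_eq_square)
    then have "1 \<le> (\<Sum>c\<in>C. smooth_step (q c x))"
      using member_le_sum[of c C "\<lambda>c. smooth_step (q c x)"] c C smooth_step_nonneg
      by (simp add: smooth_step_eq_1)
    then show "u x = 1" unfolding u_def by (rule smooth_step_eq_1)
  qed
qed

section \<open>Test functions belong to \<open>H\<^sup>1\<^sub>0\<close>\<close>

lemma indicator_scaleR_eq_self:
  fixes f :: "'a \<Rightarrow> 'b::real_vector"
  shows "(\<And>x. x \<notin> S \<Longrightarrow> f x = 0) \<Longrightarrow> (\<lambda>x. indicator S x *\<^sub>R f x) = f"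
  by (auto simp: fun_eq_iff indicator_def)

lemma pd_eq_0_outside:
  assumes "closed L" "\<And>x. x \<notin> L \<Longrightarrow> f x = 0" "x \<notin> L"
  shows "pd i f x = 0"
proof -
  have "(f has_derivative (\<lambda>h. 0)) (at x)"
    by (rule has_derivative_transform_within_open[of "\<lambda>x. 0" _ _ _ "- L"]) (use assms in auto)
  then show ?thesis by (simp add: pd_has_derivative)
qed

lemma integrable_lborel_if_compact_support:
  fixes g :: "'a::euclidean_space \<Rightarrow> real"
  assumes "continuous_on UNIV g" "compact L" "\<And>x. x \<notin> L \<Longrightarrow> g x = 0"
  shows "integrable lborel g"
proof -
  have "integrable lborel (\<lambda>x. indicator L x *\<^sub>R g x)"
    by (rule borel_integrable_compact) (auto intro: continuous_on_subset assms)
  moreover have "(\<lambda>x. indicator L x *\<^sub>R g x) = g"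
    using assms(3) by (rule indicator_scaleR_eq_self)
  ultimately show ?thesis by simp
qed

lemma lborel_integral_translate:
  fixes f :: "'a::euclidean_space \<Rightarrow> 'b::{banach, second_countable_topology}"
  assumes "f \<in> borel_measurable borel"
  shows "integrable lborel (\<lambda>x. f (c + x)) \<longleftrightarrow> integrable lborel f"
    and "(\<integral>x. f (c + x) \<partial>lborel) = integral\<^sup>L lborel f"
  using integrable_distr_eq[of "(+) c" lborel borel f] integral_distr[of "(+) c" lborel borel f] assms
  by (simp_all add: lborel_distr_plus)

lemma has_real_derivative_along_axis:
  fixes f :: "real^'d::finite \<Rightarrow> real"
  assumes "f differentiable_on UNIV"
  shows "((\<lambda>s. f (x + s *\<^sub>R axis i 1)) has_real_derivative pd i f (x + s *\<^sub>R axis i 1)) (at s)"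
proof -
  let ?y = "x + s *\<^sub>R axis i 1"
  have f': "(f has_derivative frechet_derivative f (at ?y)) (at ?y)"
    by (rule has_derivative_frechet_derivative_UNIV[OF assms])
  have "((\<lambda>s. x + s *\<^sub>R axis i 1) has_derivative (\<lambda>h. h *\<^sub>R axis i 1)) (at s)"
    by (auto intro!: derivative_eq_intros)
  from diff_chain_at[OF this f'] show ?thesis
    using linear_cmul[OF has_derivative_linear[OF f']]
    by (simp add: has_field_derivative_def comp_def pd_def mult_commute_abs)
qed

lemma difference_quotient_along_axis_tendsto:
  fixes f :: "real^'d::finite \<Rightarrow> real"
  assumes "f differentiable_on UNIV" and "filterlim t (at 0) F"
  shows "((\<lambda>n. (f (t n *\<^sub>R axis i 1 + x) - f x) / t n) \<longlongrightarrow> pd i f x) F"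
proof -
  have "((\<lambda>s. (f (x + s *\<^sub>R axis i 1) - f x) / s) \<longlongrightarrow> pd i f x) (at 0)"
    using has_real_derivative_along_axis[OF assms(1), of x i 0] unfolding DERIV_def by simp
  from filterlim_compose[OF this assms(2)] show ?thesis by (simp add: add.commute)
qed

lemma abs_difference_quotient_along_axis_le:
  fixes f :: "real^'d::finite \<Rightarrow> real"
  assumes "f differentiable_on UNIV" "\<And>y. \<bar>pd i f y\<bar> \<le> B" "t > 0"
  shows "\<bar>(f (t *\<^sub>R axis i 1 + x) - f x) / t\<bar> \<le> B"
proof -
  obtain z where "f (x + t *\<^sub>R axis i 1) - f x = t * pd i f (x + z *\<^sub>R axis i 1)"
    using MVT2[OF assms(3) has_real_derivative_along_axis[OF assms(1)], of x i] by auto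
  then show ?thesis using assms(2)[of "x + z *\<^sub>R axis i 1"] assms(3) by (simp add: add.commute)
qed

text \<open>The difference quotients integrate to \<open>0\<close> by translation invariance of \<open>lborel\<close>, and
  they are dominated on a neighbourhood of the support; dominated convergence concludes.\<close>
lemma integral_pd_eq_0:
  fixes f :: "real^'d::finite \<Rightarrow> real"
  assumes fd: "f differentiable_on UNIV" and pc: "continuous_on UNIV (pd i f)"
    and L: "compact L" and fz: "\<And>x. x \<notin> L \<Longrightarrow> f x = 0"
  shows "integral\<^sup>L lborel (pd i f) = 0"
proof -
  let ?e = "axis i 1 :: real^'d"
  have fc: "continuous_on UNIV f" using fd by (rule differentiable_imp_continuous_on)
  have fm: "f \<in> borel_measurable borel" by (rule borel_measurable_continuous_onI[OF fc])
  obtain B where B: "\<And>x. \<bar>pd i f x\<bar> \<le> B"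
  proof -
    obtain B0 where "\<And>x. x \<in> L \<Longrightarrow> \<bar>pd i f x\<bar> \<le> B0"
      using compact_imp_bounded[OF compact_continuous_image[OF continuous_on_subset[OF pc] L]]
      by (auto simp: bounded_iff)
    moreover have "x \<notin> L \<Longrightarrow> pd i f x = 0" for x
      by (rule pd_eq_0_outside[OF compact_imp_closed[OF L] fz])
    ultimately show thesis
      by (intro that[of "max B0 0"]) (metis abs_zero max.coboundedI1 max.cobounded2)
  qed
  obtain R c0 where R: "L \<subseteq> cball c0 R"
    using compact_imp_bounded[OF L] by (auto simp: bounded_subset_cball)
  define t where "t n = inverse (real (Suc n))" for n
  have t: "0 < t n" "t n \<le> 1" for n by (auto simp: t_def field_simps)
  define h where "h n x = (f (t n *\<^sub>R ?e + x) - f x) / t n" for n x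
  have "integral\<^sup>L lborel (h n) = 0" for n
  proof -
    have "integrable lborel f" by (rule integrable_lborel_if_compact_support[OF fc L fz])
    then have "integral\<^sup>L lborel (h n) = ((\<integral>x. f (t n *\<^sub>R ?e + x) \<partial>lborel) - integral\<^sup>L lborel f) / t n"
      unfolding h_def using lborel_integral_translate(1)[OF fm, of "t n *\<^sub>R ?e"] by simp
    then show ?thesis by (simp add: lborel_integral_translate(2)[OF fm])
  qed
  moreover have "(\<lambda>n. integral\<^sup>L lborel (h n)) \<longlonglongrightarrow> integral\<^sup>L lborel (pd i f)"
  proof (rule integral_dominated_convergence)
    show "pd i f \<in> borel_measurable lborel"
      using borel_measurable_continuous_onI[OF pc] by simp
    show "h n \<in> borel_measurable lborel" for n
      unfolding h_def measurable_lborel1 using fm by measurable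
    show "integrable lborel (\<lambda>x. indicator (cball c0 (R + 1)) x *\<^sub>R B)"
      by (rule borel_integrable_compact) auto
    have "filterlim t (at 0) sequentially"
      unfolding filterlim_at using t LIMSEQ_inverse_real_of_nat
      by (auto simp: t_def[abs_def] less_le intro!: always_eventually)
    then show "AE x in lborel. (\<lambda>n. h n x) \<longlonglongrightarrow> pd i f x"
      unfolding h_def by (intro AE_I2 difference_quotient_along_axis_tendsto[OF fd])
    show "AE x in lborel. norm (h n x) \<le> indicator (cball c0 (R + 1)) x *\<^sub>R B" for n
    proof (rule AE_I2)
      fix x
      have "h n x = 0" if "x \<notin> cball c0 (R + 1)"
      proof -
        have "dist x (t n *\<^sub>R ?e + x) \<le> 1" using t[of n] by (simp add: dist_norm)
        then have "x \<notin> L" "t n *\<^sub>R ?e + x \<notin> L"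
          using that R dist_triangle[of c0 x "t n *\<^sub>R ?e + x"] by (auto simp: dist_commute)
        then show ?thesis by (simp add: h_def fz)
      qed
      moreover have "\<bar>h n x\<bar> \<le> B"
        unfolding h_def by (rule abs_difference_quotient_along_axis_le[OF fd B t(1)])
      ultimately show "norm (h n x) \<le> indicator (cball c0 (R + 1)) x *\<^sub>R B"
        by (cases "x \<in> cball c0 (R + 1)") auto
    qed
  qed
  ultimately show ?thesis by (simp add: LIMSEQ_const_iff)
qed

lemma test_funE:
  assumes "u \<in> test_fun \<Omega>"
  obtains L where "compact L" "L \<subseteq> \<Omega>" "\<And>x. x \<notin> L \<Longrightarrow> u x = 0" "\<And>x. x \<notin> L \<Longrightarrow> grad u x = 0"
    "u differentiable_on UNIV" "continuous_on UNIV u" "continuous_on UNIV (grad u)"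
    "\<And>i. continuous_on UNIV (pd i u)"
proof -
  obtain L where L: "compact L" "L \<subseteq> \<Omega>" "\<And>x. x \<notin> L \<Longrightarrow> u x = 0" and us: "u \<in> smooth_fun"
    using assms unfolding test_fun_def by auto
  have "x \<notin> L \<Longrightarrow> grad u x = 0" for x
    using pd_eq_0_outside[OF compact_imp_closed[OF L(1)] L(3)] by (simp add: grad_def vec_eq_iff)
  moreover have "continuous_on UNIV (grad u)"
    unfolding grad_def by (intro continuous_intros smooth_funD[OF us])
  ultimately show thesis using L smooth_funD[OF us] by (intro that) auto
qed

lemma test_fun_weak_grad:
  assumes u: "u \<in> test_fun \<Omega>"
  shows "weak_grad \<Omega> u (grad u)"
  unfolding weak_grad_def
proof (intro ballI allI)
  fix \<phi> i assume \<phi>: "\<phi> \<in> test_fun \<Omega>"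
  obtain Lu where Lu: "compact Lu" "Lu \<subseteq> \<Omega>" "\<And>x. x \<notin> Lu \<Longrightarrow> u x = 0"
    and ud: "u differentiable_on UNIV" "continuous_on UNIV u" "\<And>i. continuous_on UNIV (pd i u)"
    using test_funE[OF u] by metis
  obtain L\<phi> where L\<phi>: "compact L\<phi>" "L\<phi> \<subseteq> \<Omega>" "\<And>x. x \<notin> L\<phi> \<Longrightarrow> \<phi> x = 0"
    and \<phi>d: "\<phi> differentiable_on UNIV" "continuous_on UNIV \<phi>" "\<And>i. continuous_on UNIV (pd i \<phi>)"
    using test_funE[OF \<phi>] by metis
  have "(LINT x:\<Omega>|lborel. u x * pd i \<phi> x) = (\<integral>x. u x * pd i \<phi> x \<partial>lborel)"
    unfolding set_lebesgue_integral_def using Lu by (subst indicator_scaleR_eq_self) auto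
  moreover have "(LINT x:\<Omega>|lborel. grad u x $ i * \<phi> x) = (\<integral>x. pd i u x * \<phi> x \<partial>lborel)"
    unfolding set_lebesgue_integral_def grad_def using L\<phi> by (subst indicator_scaleR_eq_self) auto
  moreover have "(\<integral>x. u x * pd i \<phi> x \<partial>lborel) + (\<integral>x. pd i u x * \<phi> x \<partial>lborel) = 0"
  proof -
    have "integrable lborel (\<lambda>x. u x * pd i \<phi> x)"
      using Lu(3) by (auto intro!: integrable_lborel_if_compact_support[OF _ Lu(1)] continuous_intros ud \<phi>d)
    moreover have "integrable lborel (\<lambda>x. pd i u x * \<phi> x)"
      using L\<phi>(3) by (auto intro!: integrable_lborel_if_compact_support[OF _ L\<phi>(1)] continuous_intros ud \<phi>d)
    moreover have "integral\<^sup>L lborel (pd i (\<lambda>x. u x * \<phi> x)) = 0"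
      by (rule integral_pd_eq_0[OF _ _ Lu(1)])
         (auto simp: pd_mult[OF ud(1) \<phi>d(1)] Lu(3) intro!: continuous_intros ud \<phi>d differentiable_on_mult)
    ultimately show ?thesis by (simp add: pd_mult[OF ud(1) \<phi>d(1)])
  qed
  ultimately show "(LINT x:\<Omega>|lborel. u x * pd i \<phi> x) = - (LINT x:\<Omega>|lborel. grad u x $ i * \<phi> x)"
    by linarith
qed

lemma test_fun_in_H1_0:
  assumes u: "u \<in> test_fun \<Omega>"
  shows "u \<in> H1_0 \<Omega>"
proof -
  obtain L where L: "compact L" "L \<subseteq> \<Omega>" "\<And>x. x \<notin> L \<Longrightarrow> u x = 0" "\<And>x. x \<notin> L \<Longrightarrow> grad u x = 0"
    and uc: "continuous_on UNIV u" "continuous_on UNIV (grad u)"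
    using test_funE[OF u] by metis
  have "integrable lborel (\<lambda>x. (u x)\<^sup>2)" "integrable lborel (\<lambda>x. (norm (grad u x))\<^sup>2)"
    using L(3,4) by (auto intro!: integrable_lborel_if_compact_support[OF _ L(1)] continuous_intros uc)
  moreover have "(\<lambda>x. indicator \<Omega> x *\<^sub>R (u x)\<^sup>2) = (\<lambda>x. (u x)\<^sup>2)"
    "(\<lambda>x. indicator \<Omega> x *\<^sub>R (norm (grad u x))\<^sup>2) = (\<lambda>x. (norm (grad u x))\<^sup>2)"
    using L by (auto simp: fun_eq_iff indicator_def)
  moreover have "u \<in> borel_measurable lborel" "grad u \<in> borel_measurable lborel"
    using borel_measurable_continuous_onI[OF uc(1)] borel_measurable_continuous_onI[OF uc(2)] by simp_all
  ultimately have "L2_on \<Omega> u" "L2v_on \<Omega> (grad u)"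
    unfolding L2_on_def L2v_on_def set_integrable_def by simp_all
  then show ?thesis
    unfolding H1_0_def using test_fun_weak_grad[OF u] u
    by (auto intro!: exI[of _ "grad u"] exI[of _ "\<lambda>n. u"])
qed

lemma dirichlet_finite:
  assumes "u \<in> H1_0 \<Omega>"
  shows "dirichlet \<Omega> u < \<infinity>"
proof -
  have "L2v_on \<Omega> (wgrad \<Omega> u)"
    using assms someI_ex[of "\<lambda>g. weak_grad \<Omega> u g \<and> L2v_on \<Omega> g"]
    unfolding H1_0_def wgrad_def by blast
  then have "integrable lborel (\<lambda>x. indicator \<Omega> x *\<^sub>R (norm (wgrad \<Omega> u x))\<^sup>2)"
    unfolding L2v_on_def set_integrable_def by blast
  then have "(\<integral>\<^sup>+ x. ennreal (norm (indicator \<Omega> x *\<^sub>R (norm (wgrad \<Omega> u x))\<^sup>2)) \<partial>lborel) < \<infinity>"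
    unfolding integrable_iff_bounded by blast
  moreover have "(\<integral>\<^sup>+ x. ennreal (norm (indicator \<Omega> x *\<^sub>R (norm (wgrad \<Omega> u x))\<^sup>2)) \<partial>lborel)
      = dirichlet \<Omega> u"
    unfolding dirichlet_def by (rule nn_integral_cong) (auto simp: indicator_def)
  ultimately show ?thesis by simp
qed

lemma weak_conv_H1_0_const: "u \<in> H1_0 \<Omega> \<Longrightarrow> weak_conv_H1_0 \<Omega> (\<lambda>k. u) u"
  by (simp add: weak_conv_H1_0_def)

lemma Gamma_conv_weak_H1_0_le_const_bound:
  assumes "Gamma_conv_weak_H1_0 \<Omega> Fk F" "u \<in> H1_0 \<Omega>" "\<And>k. Fk k u \<le> c"
  shows "F u \<le> c"
proof -
  have "F u \<le> liminf (\<lambda>k. Fk k u)"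
    using assms(1,2) weak_conv_H1_0_const unfolding Gamma_conv_weak_H1_0_def by blast
  also have "\<dots> \<le> liminf (\<lambda>k. c)"
    by (rule Liminf_mono) (use assms(3) in auto)
  finally show ?thesis by (simp add: Liminf_const)
qed

lemma nn_integral_cutoff_increment_le:
  fixes u :: "'a \<Rightarrow> real" and b :: "'a \<times> 'a \<Rightarrow> real"
  assumes "\<And>x. 0 \<le> u x" "\<And>x. u x \<le> 1" "\<And>x. x \<in> K \<Longrightarrow> u x = 1"
    and "\<And>z. z \<in> S \<times> S \<Longrightarrow> 0 \<le> b z"
  shows "(\<integral>\<^sup>+ z\<in>S \<times> S. ennreal ((u (fst z) - u (snd z))\<^sup>2 * b z) \<partial>N)
    \<le> (\<integral>\<^sup>+ z\<in>S \<times> S - K \<times> K. ennreal (b z) \<partial>N)"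
proof (rule nn_integral_mono)
  fix z :: "'a \<times> 'a"
  obtain x y where z: "z = (x, y)" by (cases z)
  have "(u x - u y)\<^sup>2 * b z \<le> b z" if "z \<in> S \<times> S"
  proof -
    have "(u x - u y)\<^sup>2 \<le> 1"
      unfolding abs_square_le_1 using assms(1,2)[of x] assms(1,2)[of y] by linarith
    then show ?thesis using assms(4)[OF that] by (intro mult_left_le_one_le) auto
  qed
  then show "ennreal ((u (fst z) - u (snd z))\<^sup>2 * b z) * indicator (S \<times> S) z
      \<le> ennreal (b z) * indicator (S \<times> S - K \<times> K) z"
    using assms(3) z by (auto simp: indicator_def ennreal_leI)
qed

lemma emeasure_eq_0_if_compact_subsets_null:
  fixes \<Omega> :: "'a::euclidean_space set"
  assumes "open \<Omega>" and sets_eq: "sets \<nu> = sets (restrict_space borel \<Omega>)"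
    and "\<And>K. compact K \<Longrightarrow> K \<subseteq> \<Omega> \<Longrightarrow> emeasure \<nu> K = 0"
    and "A \<in> sets \<nu>"
  shows "emeasure \<nu> A = 0"
proof -
  have sets_iff: "B \<in> sets \<nu> \<longleftrightarrow> B \<subseteq> \<Omega> \<and> B \<in> sets borel" for B
    using sets_restrict_space_iff[of \<Omega> borel B] \<open>open \<Omega>\<close> by (simp add: sets_eq)
  obtain C :: "nat \<Rightarrow> 'a set" where C: "\<And>n. compact (C n)" "\<And>n. C n \<subseteq> \<Omega>" "\<Union>(range C) = \<Omega>"
    using open_Union_compact_subsets[OF \<open>open \<Omega>\<close>] by metis
  have "emeasure \<nu> (\<Union>n. C n) = 0"
    using C assms(3) by (intro emeasure_UN_eq_0) (auto simp: sets_iff compact_imp_closed)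
  moreover have "emeasure \<nu> A \<le> emeasure \<nu> \<Omega>"
    using assms(1,4) by (intro emeasure_mono) (auto simp: sets_iff)
  ultimately show ?thesis using C(3) by simp
qed

lemma killing_measure_compact_null:
  fixes \<Omega> A :: "(real^'d::finite) set"
    and a :: "nat \<Rightarrow> ((real^'d) \<times> (real^'d)) \<Rightarrow> real"
    and \<mu> :: "((real^'d) \<times> (real^'d)) measure"
  assumes \<Omega>_open: "open \<Omega>"
    and a_nonneg: "\<And>k z. z \<in> \<Omega> \<times> \<Omega> \<Longrightarrow> a k z \<ge> 0"
    and Gamma: "Gamma_conv_weak_H1_0 \<Omega>
        (\<lambda>k u. (\<integral>\<^sup>+ z\<in>\<Omega> \<times> \<Omega>. ennreal ((u (fst z) - u (snd z))\<^sup>2 * a k z) \<partial>(lborel \<Otimes>\<^sub>M lborel))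
               + dirichlet \<Omega> u) F"
    and \<nu>_sets: "sets \<nu> = sets (restrict_space borel \<Omega>)"
    and F_repr: "\<And>u. u \<in> test_fun \<Omega> \<Longrightarrow>
        F u = (\<integral>\<^sup>+ z. ennreal ((u (fst z) - u (snd z))\<^sup>2) \<partial>\<mu>)
            + (\<integral>\<^sup>+ x. ennreal ((u x)\<^sup>2) \<partial>\<nu>) + dirichlet \<Omega> u"
    and tight: "\<And>\<epsilon>. \<epsilon> > 0 \<Longrightarrow> \<exists>K. compact K \<and> K \<subseteq> \<Omega> \<and>
        (\<forall>k. (\<integral>\<^sup>+ z\<in>(\<Omega> \<times> \<Omega>) - (K \<times> K). ennreal (a k z) \<partial>(lborel \<Otimes>\<^sub>M lborel)) \<le> ennreal \<epsilon>)"
    and A: "compact A" "A \<subseteq> \<Omega>"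
  shows "emeasure \<nu> A = 0"
proof -
  have "emeasure \<nu> A \<le> 0 + ennreal \<epsilon>" if "\<epsilon> > 0" for \<epsilon>
  proof -
    obtain K where K: "compact K" "K \<subseteq> \<Omega>"
      "\<And>k. (\<integral>\<^sup>+ z\<in>(\<Omega> \<times> \<Omega>) - (K \<times> K). ennreal (a k z) \<partial>(lborel \<Otimes>\<^sub>M lborel)) \<le> ennreal \<epsilon>"
      using tight[OF \<open>\<epsilon> > 0\<close>] by blast
    obtain u L where u: "u \<in> smooth_fun" "compact L" "L \<subseteq> \<Omega>" "\<And>x. x \<notin> L \<Longrightarrow> u x = 0"
      "\<And>x. 0 \<le> u x" "\<And>x. u x \<le> 1" "\<And>x. x \<in> K \<union> A \<Longrightarrow> u x = 1"
      using smooth_cutoff[OF \<Omega>_open, of "K \<union> A"] K A by blast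
    have ut: "u \<in> test_fun \<Omega>" unfolding test_fun_def using u by blast
    have D: "dirichlet \<Omega> u < \<infinity>" by (rule dirichlet_finite[OF test_fun_in_H1_0[OF ut]])
    have "F u \<le> ennreal \<epsilon> + dirichlet \<Omega> u"
    proof (rule Gamma_conv_weak_H1_0_le_const_bound[OF Gamma test_fun_in_H1_0[OF ut]])
      fix k
      have "(\<integral>\<^sup>+ z\<in>\<Omega> \<times> \<Omega>. ennreal ((u (fst z) - u (snd z))\<^sup>2 * a k z) \<partial>(lborel \<Otimes>\<^sub>M lborel))
          \<le> ennreal \<epsilon>"
        using nn_integral_cutoff_increment_le[of u K \<Omega> "a k"] u(5-7) a_nonneg K(3) order_trans by blast
      then show "(\<integral>\<^sup>+ z\<in>\<Omega> \<times> \<Omega>. ennreal ((u (fst z) - u (snd z))\<^sup>2 * a k z) \<partial>(lborel \<Otimes>\<^sub>M lborel))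
          + dirichlet \<Omega> u \<le> ennreal \<epsilon> + dirichlet \<Omega> u"
        by (rule add_right_mono)
    qed
    moreover have "emeasure \<nu> A + dirichlet \<Omega> u \<le> F u"
    proof -
      have "A \<in> sets \<nu>"
        using A \<Omega>_open by (simp add: \<nu>_sets sets_restrict_space_iff compact_imp_closed)
      then have "emeasure \<nu> A = (\<integral>\<^sup>+ x. indicator A x \<partial>\<nu>)" by simp
      also have "\<dots> \<le> (\<integral>\<^sup>+ x. ennreal ((u x)\<^sup>2) \<partial>\<nu>)"
        by (rule nn_integral_mono) (auto simp: indicator_def u(7))
      finally show ?thesis
        unfolding F_repr[OF ut] by (intro add_right_mono add_increasing) auto
    qed
    ultimately have "emeasure \<nu> A + dirichlet \<Omega> u \<le> ennreal \<epsilon> + dirichlet \<Omega> u"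
      by (rule order_trans[rotated])
    then show ?thesis
      using D ennreal_add_left_cancel_le[of "dirichlet \<Omega> u" "emeasure \<nu> A" "ennreal \<epsilon>"]
      by (auto simp: add.commute)
  qed
  then have "emeasure \<nu> A \<le> 0" by (rule ennreal_le_epsilon) simp
  then show ?thesis by simp
qed

theorem proposition2p7:
  fixes \<Omega> :: "(real^'d::finite) set"
    and M :: real
    and a :: "nat \<Rightarrow> ((real^'d) \<times> (real^'d)) \<Rightarrow> real"
    and F :: "(real^'d \<Rightarrow> real) \<Rightarrow> ennreal"
    and \<mu> :: "((real^'d) \<times> (real^'d)) measure"
    and \<nu> :: "(real^'d) measure"
  assumes \<Omega>_open: "open \<Omega>" and \<Omega>_conn: "connected \<Omega>" and \<Omega>_bdd: "bounded \<Omega>"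
    and M_pos: "M > 0"
    and a_int: "\<And>k. set_integrable (lborel \<Otimes>\<^sub>M lborel) (\<Omega> \<times> \<Omega>) (a k)"
    and a_nonneg: "\<And>k z. z \<in> \<Omega> \<times> \<Omega> \<Longrightarrow> a k z \<ge> 0"
    and a_bound: "\<And>k. (\<integral>\<^sup>+ z\<in>\<Omega> \<times> \<Omega>. ennreal (a k z) \<partial>(lborel \<Otimes>\<^sub>M lborel)) \<le> ennreal M"
    and Gamma: "Gamma_conv_weak_H1_0 \<Omega>
        (\<lambda>k u. (\<integral>\<^sup>+ z\<in>\<Omega> \<times> \<Omega>. ennreal ((u (fst z) - u (snd z))\<^sup>2 * a k z) \<partial>(lborel \<Otimes>\<^sub>M lborel))
               + dirichlet \<Omega> u) F"
    and \<mu>_sets: "sets \<mu> = sets (restrict_space borel (\<Omega> \<times> \<Omega>))"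
    and \<mu>_radon: "\<And>K. compact K \<Longrightarrow> K \<subseteq> \<Omega> \<times> \<Omega> \<Longrightarrow> emeasure \<mu> K < \<infinity>"
    and \<mu>_sym: "\<And>A B. A \<in> sets borel \<Longrightarrow> B \<in> sets borel \<Longrightarrow> A \<subseteq> \<Omega> \<Longrightarrow> B \<subseteq> \<Omega> \<Longrightarrow>
        emeasure \<mu> (A \<times> B) = emeasure \<mu> (B \<times> A)"
    and \<mu>_diag: "emeasure \<mu> {(x, x) | x. x \<in> \<Omega>} = 0"
    and \<nu>_sets: "sets \<nu> = sets (restrict_space borel \<Omega>)"
    and \<nu>_radon: "\<And>K. compact K \<Longrightarrow> K \<subseteq> \<Omega> \<Longrightarrow> emeasure \<nu> K < \<infinity>"
    and F_repr: "\<And>u. u \<in> test_fun \<Omega> \<Longrightarrow>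
        F u = (\<integral>\<^sup>+ z. ennreal ((u (fst z) - u (snd z))\<^sup>2) \<partial>\<mu>)
            + (\<integral>\<^sup>+ x. ennreal ((u x)\<^sup>2) \<partial>\<nu>) + dirichlet \<Omega> u"
    and tight: "\<And>\<epsilon>. \<epsilon> > 0 \<Longrightarrow> \<exists>K. compact K \<and> K \<subseteq> \<Omega> \<and>
        (\<forall>k. (\<integral>\<^sup>+ z\<in>(\<Omega> \<times> \<Omega>) - (K \<times> K). ennreal (a k z) \<partial>(lborel \<Otimes>\<^sub>M lborel)) \<le> ennreal \<epsilon>)"
  shows "\<forall>A\<in>sets \<nu>. emeasure \<nu> A = 0"
proof -
  have "emeasure \<nu> K = 0" if "compact K" "K \<subseteq> \<Omega>" for K
    using killing_measure_compact_null[OF \<Omega>_open a_nonneg Gamma \<nu>_sets F_repr tight that] .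
  then show ?thesis
    using emeasure_eq_0_if_compact_subsets_null[OF \<Omega>_open \<nu>_sets] by blast
qed

end
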